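(* A unicyclic graph that has a vertex of degree at least four, or that has a vertex of degree three not contained in its cycle, is not in $\mathcal{G}^{\rm SSP}$.
   Context: All graphs are finite, simple, undirected. A unicyclic graph is a connected graph containing exactly one cycle. For a graph $G$ on $\{1,\ldots,n\}$, $\mathcal{S}(G)$ is the set of real symmetric $n\times n$ matrices $A=(a_{ij})$ with $a_{ij}\neq0$ iff $\{i,j\}\in E(G)$ for $i\neq j$ (diagonal arbitrary). A real symmetric $A$ has the strong spectral property (SSP) if the only real symmetric $X$ with $A\circ X=0$, $I\circ X=0$, $AX-XA=0$ is $X=0$ ($\circ$ = entrywise product). $\mathcal{G}^{\rm SSP}$ is the set of graphs $G$ such that every matrix in $\mathcal{S}(G)$ has the SSP. *)

theory Defs
  imports "HOL-Analysis.Analysis"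
begin

definition simple_graph :: "('n::finite \<Rightarrow> 'n \<Rightarrow> bool) \<Rightarrow> bool" where
  "simple_graph E \<longleftrightarrow> (\<forall>u v. E u v \<longrightarrow> E v u) \<and> (\<forall>v. \<not> E v v)"

definition connected_graph :: "('n::finite \<Rightarrow> 'n \<Rightarrow> bool) \<Rightarrow> bool" where
  "connected_graph E \<longleftrightarrow> (\<forall>u v. E\<^sup>*\<^sup>* u v)"

definition degree :: "('n::finite \<Rightarrow> 'n \<Rightarrow> bool) \<Rightarrow> 'n \<Rightarrow> nat" where
  "degree E v = card {u. E v u}"

definition cycle_list :: "('n::finite \<Rightarrow> 'n \<Rightarrow> bool) \<Rightarrow> 'n list \<Rightarrow> bool" where
  "cycle_list E vs \<longleftrightarrow> length vs \<ge> 3 \<and> distinct vs \<and>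
     (\<forall>i < length vs. E (vs ! i) (vs ! ((i + 1) mod length vs)))"

definition cycle_edges :: "'n list \<Rightarrow> 'n set set" where
  "cycle_edges vs = {{vs ! i, vs ! ((i + 1) mod length vs)} | i. i < length vs}"

text \<open>The cycles of G (as subgraphs, identified by their edge sets).\<close>
definition cycles :: "('n::finite \<Rightarrow> 'n \<Rightarrow> bool) \<Rightarrow> 'n set set set" where
  "cycles E = {cycle_edges vs | vs. cycle_list E vs}"

definition unicyclic :: "('n::finite \<Rightarrow> 'n \<Rightarrow> bool) \<Rightarrow> bool" where
  "unicyclic E \<longleftrightarrow> connected_graph E \<and> card (cycles E) = 1"

definition on_cycle :: "('n::finite \<Rightarrow> 'n \<Rightarrow> bool) \<Rightarrow> 'n \<Rightarrow> bool" where
  "on_cycle E v \<longleftrightarrow> (\<exists>vs. cycle_list E vs \<and> v \<in> set vs)"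

definition S_graph :: "('n::finite \<Rightarrow> 'n \<Rightarrow> bool) \<Rightarrow> (real^'n^'n) set" where
  "S_graph E = {A. transpose A = A \<and> (\<forall>i j. i \<noteq> j \<longrightarrow> (A $ i $ j \<noteq> 0 \<longleftrightarrow> E i j))}"

definition SSP :: "real^'n^'n \<Rightarrow> bool" where
  "SSP A \<longleftrightarrow> (\<forall>X :: real^'n^'n. transpose X = X \<and>
      (\<forall>i j. A $ i $ j * X $ i $ j = 0) \<and> (\<forall>i. X $ i $ i = 0) \<and>
      A ** X - X ** A = 0 \<longrightarrow> X = 0)"

definition G_SSP :: "('n::finite \<Rightarrow> 'n \<Rightarrow> bool) \<Rightarrow> bool" where
  "G_SSP E \<longleftrightarrow> (\<forall>A \<in> S_graph E. SSP A)"

end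

(*
  If a vertex v has two neighbours in a vertex set Y that is joined to the rest of the graph
  only through v, then the vector that is 1 on Y, except for the value 1 - k at one such
  neighbour (k the number of neighbours of v in Y), has vanishing neighbour sums at every
  vertex outside Y. Given two such sets Y and Z, disjoint and without edges between them, with
  vectors y and z, the diagonal of the matrix A in S(G) with unit entries on the edges can be
  chosen so that A y = A z = 0. Then X = y z^T + z y^T is a nonzero symmetric matrix with zero
  diagonal that vanishes on the edges and satisfies A X = X A = 0, so A fails the SSP.

  In a unicyclic graph such sets are components of G - v. If v lies on the cycle and has
  degree at least 4, Z is the component containing both cycle neighbours of v and Y consists
  of the components of two further neighbours, which lie outside Z since otherwise an edge
  at v would close a second cycle. If v is off the cycle and has degree at least 3, Y consists
  of the components at two neighbours not leading to the cycle, and Z is the component of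
  G - w containing the rest of the cycle, where w is the vertex at which a walk from v first
  meets the cycle.
*)

theory Submission
  imports Defs "HOL-Library.Transitive_Closure_Table"
begin

section \<open>Matrices without the strong spectral property\<close>

definition graph_matrix :: "('n::finite \<Rightarrow> 'n \<Rightarrow> bool) \<Rightarrow> ('n \<Rightarrow> real) \<Rightarrow> real^'n^'n" where
  "graph_matrix E d = (\<chi> i j. if i = j then d i else if E i j then 1 else 0)"

lemma graph_matrix_in_S_graph:
  assumes "simple_graph E"
  shows "graph_matrix E d \<in> S_graph E"
  using assms by (auto simp: S_graph_def simple_graph_def graph_matrix_def transpose_def vec_eq_iff)

lemma graph_matrix_mult_vec_nth:
  assumes "simple_graph E"
  shows "(graph_matrix E d *v y) $ i = d i * y $ i + (\<Sum>k | E i k. y $ k)"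
proof -
  have "(graph_matrix E d *v y) $ i
      = (\<Sum>k\<in>UNIV. (if k = i then d i * y $ i else 0) + (if E i k then y $ k else 0))"
    using assms unfolding matrix_vector_mult_def vec_lambda_beta simple_graph_def
    by (intro sum.cong) (auto simp: graph_matrix_def)
  then show ?thesis
    by (simp add: sum.distrib sum.inter_filter[symmetric])
qed

definition balanced :: "('n::finite \<Rightarrow> 'n \<Rightarrow> bool) \<Rightarrow> real^'n \<Rightarrow> bool" where
  "balanced E y \<longleftrightarrow> (\<forall>i. y $ i = 0 \<longrightarrow> (\<Sum>k | E i k. y $ k) = 0)"

definition balancing_diagonal :: "('n::finite \<Rightarrow> 'n \<Rightarrow> bool) \<Rightarrow> real^'n \<Rightarrow> 'n \<Rightarrow> real" where
  "balancing_diagonal E w i = - (\<Sum>k | E i k. w $ k) / w $ i"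

lemma graph_matrix_balancing_kernel:
  assumes "simple_graph E" "balanced E y" "balanced E z" "\<And>i. y $ i = 0 \<or> z $ i = 0"
  shows "graph_matrix E (balancing_diagonal E (y + z)) *v y = 0"
proof -
  have "(graph_matrix E (balancing_diagonal E (y + z)) *v y) $ i = 0" for i
  proof (cases "y $ i = 0")
    case True
    then show ?thesis
      using assms(2) by (simp add: graph_matrix_mult_vec_nth[OF assms(1)] balanced_def)
  next
    case False
    then have "z $ i = 0" and "(\<Sum>k | E i k. z $ k) = 0"
      using assms(3,4) by (auto simp: balanced_def)
    then show ?thesis
      using False
      by (simp add: graph_matrix_mult_vec_nth[OF assms(1)] balancing_diagonal_def sum.distrib)
  qed
  then show ?thesis
    by (simp add: vec_eq_iff)
qed

lemma not_SSP_if_kernel_vectors: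
  fixes A :: "real^'n^'n"
  assumes sym: "transpose A = A" and Ay: "A *v y = 0" and Az: "A *v z = 0"
    and ya: "y $ a \<noteq> 0" and zc: "z $ c \<noteq> 0"
    and orth: "\<And>i j. i = j \<or> A $ i $ j \<noteq> 0 \<Longrightarrow> y $ i * z $ j = 0"
  shows "\<not> SSP A"
proof
  assume "SSP A"
  define X :: "real^'n^'n" where "X = (\<chi> i j. y $ i * z $ j + z $ i * y $ j)"
  have X_sym: "transpose X = X"
    by (simp add: X_def transpose_def vec_eq_iff)
  have X_pattern: "A $ i $ j * X $ i $ j = 0" for i j
  proof (cases "A $ i $ j = 0")
    case False
    moreover from this have "A $ j $ i \<noteq> 0"
      using sym by (metis transpose_def vec_lambda_beta)
    ultimately have "y $ i * z $ j = 0" "y $ j * z $ i = 0"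
      using orth by blast+
    then show ?thesis by (auto simp: X_def mult.commute)
  qed simp
  have X_diag: "X $ i $ i = 0" for i
    using orth by (simp add: X_def mult.commute[of "z $ i"])
  have "(A ** X) $ i $ j = (A *v y) $ i * z $ j + (A *v z) $ i * y $ j" for i j
    by (simp add: matrix_matrix_mult_def matrix_vector_mult_def X_def
        distrib_left sum.distrib sum_distrib_right mult.assoc)
  then have AX: "A ** X = 0"
    using Ay Az by (simp add: vec_eq_iff)
  have "X ** A = transpose (A ** X)"
    by (simp add: matrix_transpose_mul sym X_sym)
  then have XA: "X ** A = 0"
    using AX by (simp add: transpose_def vec_eq_iff)
  have "X = 0"
    using \<open>SSP A\<close> X_sym X_pattern X_diag AX XA unfolding SSP_def by simp
  moreover have "z $ a = 0"
    using orth[of a a] ya by simp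
  then have "X $ a $ c \<noteq> 0"
    using ya zc by (simp add: X_def)
  ultimately show False
    by simp
qed

lemma not_G_SSP_if_separated_balanced_vectors:
  assumes sg: "simple_graph E" and y: "balanced E y" and z: "balanced E z"
    and ya: "y $ a \<noteq> 0" and zc: "z $ c \<noteq> 0"
    and separated: "\<And>i j. y $ i \<noteq> 0 \<Longrightarrow> z $ j \<noteq> 0 \<Longrightarrow> i \<noteq> j \<and> \<not> E i j"
  shows "\<not> G_SSP E"
proof -
  define A where "A = graph_matrix E (balancing_diagonal E (y + z))"
  have disjoint: "y $ i = 0 \<or> z $ i = 0" for i
    using separated by blast
  have A_S: "A \<in> S_graph E"
    unfolding A_def by (rule graph_matrix_in_S_graph[OF sg])
  have "A *v y = 0"
    unfolding A_def using graph_matrix_balancing_kernel[OF sg y z disjoint] .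
  moreover have "A *v z = 0"
    unfolding A_def add.commute[of y z]
    by (rule graph_matrix_balancing_kernel[OF sg z y]) (use disjoint in blast)
  moreover have "y $ i * z $ j = 0" if "i = j \<or> A $ i $ j \<noteq> 0" for i j
    using that separated A_S by (auto simp: S_graph_def)
  ultimately have "\<not> SSP A"
    using not_SSP_if_kernel_vectors[OF _ _ _ ya zc] A_S by (auto simp: S_graph_def)
  then show ?thesis
    using A_S by (auto simp: G_SSP_def)
qed

section \<open>Pendant vertex sets\<close>

definition pendant_set :: "('n::finite \<Rightarrow> 'n \<Rightarrow> bool) \<Rightarrow> 'n \<Rightarrow> 'n set \<Rightarrow> bool" where
  "pendant_set E v Y \<longleftrightarrow> (\<forall>i k. E i k \<longrightarrow> k \<in> Y \<longrightarrow> i \<notin> Y \<longrightarrow> i = v) \<and>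
     (\<exists>a b. a \<noteq> b \<and> a \<in> Y \<and> b \<in> Y \<and> E v a \<and> E v b)"

lemma balanced_vector_on_pendant_set:
  fixes E :: "'n::finite \<Rightarrow> 'n \<Rightarrow> bool"
  assumes "pendant_set E v Y"
  obtains y where "balanced E y" "\<And>i. y $ i \<noteq> 0 \<longleftrightarrow> i \<in> Y"
proof -
  obtain a b where ab: "a \<noteq> b" "a \<in> Y" "b \<in> Y" "E v a" "E v b"
    and boundary: "\<And>i k. E i k \<Longrightarrow> k \<in> Y \<Longrightarrow> i \<notin> Y \<Longrightarrow> i = v"
    using assms unfolding pendant_set_def by blast
  define N where "N = {k \<in> Y. E v k}"
  have aN: "a \<in> N" and "b \<in> N"
    using ab by (auto simp: N_def)
  then have N2: "2 \<le> card N"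
    using card_mono[of N "{a, b}"] ab(1) by simp
  define y :: "real^'n" where
    "y = (\<chi> k. if k \<in> Y then if k = a then 1 - real (card N) else 1 else 0)"
  have support: "y $ i \<noteq> 0 \<longleftrightarrow> i \<in> Y" for i
    using N2 by (simp add: y_def)
  have "(\<Sum>k | E i k. y $ k) = 0" if "i \<notin> Y" for i
  proof (cases "i = v")
    case True
    have "(\<Sum>k | E i k. y $ k) = sum (($) y) N"
      using True support by (intro sum.mono_neutral_cong_right) (auto simp: N_def)
    also have "\<dots> = y $ a + (\<Sum>k \<in> N - {a}. 1)"
      using aN by (simp add: sum.remove y_def N_def)
    also have "\<dots> = 0"
      using aN N2 by (simp add: y_def N_def)
    finally show ?thesis .
  next
    case False
    then have "y $ k = 0" if "E i k" for k
      using boundary[OF that] \<open>i \<notin> Y\<close> support by blast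
    then show ?thesis
      by simp
  qed
  then have "balanced E y"
    using support unfolding balanced_def by blast
  with support show thesis
    using that by blast
qed

lemma not_G_SSP_if_two_pendant_sets:
  assumes "simple_graph E" "pendant_set E v Y" "pendant_set E w Z"
    and "Y \<inter> Z = {}" "\<And>i j. i \<in> Y \<Longrightarrow> j \<in> Z \<Longrightarrow> \<not> E i j"
  shows "\<not> G_SSP E"
proof -
  obtain y where y: "balanced E y" "\<And>i. y $ i \<noteq> 0 \<longleftrightarrow> i \<in> Y"
    using balanced_vector_on_pendant_set[OF assms(2)] by blast
  obtain z where z: "balanced E z" "\<And>i. z $ i \<noteq> 0 \<longleftrightarrow> i \<in> Z"
    using balanced_vector_on_pendant_set[OF assms(3)] by blast
  obtain a c where "a \<in> Y" "c \<in> Z"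
    using assms(2,3) unfolding pendant_set_def by blast
  then show ?thesis
    using not_G_SSP_if_separated_balanced_vectors[OF assms(1) y(1) z(1), of a c] assms(4,5) y(2) z(2)
    by blast
qed

section \<open>Walks and components\<close>

lemma simple_graph_sym: "simple_graph E \<Longrightarrow> E a b \<Longrightarrow> E b a"
  by (simp add: simple_graph_def)

lemma simple_graph_neq: "simple_graph E \<Longrightarrow> E a b \<Longrightarrow> a \<noteq> b"
  by (auto simp: simple_graph_def)

definition component :: "('a \<Rightarrow> 'a \<Rightarrow> bool) \<Rightarrow> 'a \<Rightarrow> 'a set" where
  "component R u = {x. R\<^sup>*\<^sup>* u x}"

lemma component_self: "u \<in> component R u"
  by (simp add: component_def)

lemma component_step: "x \<in> component R u \<Longrightarrow> R x y \<Longrightarrow> y \<in> component R u"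
  by (auto simp: component_def)

lemma component_subset: "x \<in> component R u \<Longrightarrow> component R x \<subseteq> component R u"
  by (auto simp: component_def)

lemma components_disjoint:
  assumes "symp R" "a \<notin> component R n"
  shows "component R a \<inter> component R n = {}"
proof -
  have "R\<^sup>*\<^sup>* n a" if "R\<^sup>*\<^sup>* a t" "R\<^sup>*\<^sup>* n t" for t
    using that symp_rtranclp[OF assms(1)] by (meson rtranclp_trans sympD)
  then show ?thesis
    using assms(2) by (auto simp: component_def)
qed

lemma component_subset_component:
  assumes "\<And>a b. a \<in> component R u \<Longrightarrow> R a b \<Longrightarrow> S a b"
  shows "component R u \<subseteq> component S u"
proof
  fix x assume "x \<in> component R u"
  then have "R\<^sup>*\<^sup>* u x" by (simp add: component_def)
  then have "S\<^sup>*\<^sup>* u x"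
  proof (induction rule: rtranclp_induct)
    case (step y z)
    then show ?case
      using assms by (metis component_def mem_Collect_eq rtranclp.rtrancl_into_rtrancl)
  qed simp
  then show "x \<in> component S u" by (simp add: component_def)
qed

lemma rtranclp_if_successively:
  assumes "successively R (x # xs)" "z \<in> set (x # xs)"
  shows "R\<^sup>*\<^sup>* x z"
  using assms
proof (induction xs arbitrary: x)
  case (Cons y ys)
  then show ?case
    by (auto intro: converse_rtranclp_into_rtranclp)
qed simp

lemma rtranclp_distinct_successively:
  assumes "R\<^sup>*\<^sup>* x y"
  obtains xs where "successively R (x # xs)" "distinct (x # xs)" "last (x # xs) = y"
proof -
  obtain xs where "rtrancl_path R x xs y" "distinct (x # xs)"
    using assms rtranclp_eq_rtrancl_path rtrancl_path_distinct by metis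
  moreover have "rtrancl_path R x xs y \<Longrightarrow> successively R (x # xs) \<and> last (x # xs) = y" for xs
    by (induction rule: rtrancl_path.induct) (auto elim: rtrancl_path.cases)
  ultimately show thesis
    using that by blast
qed

lemma rtranclp_exit:
  assumes "R\<^sup>*\<^sup>* x y" "P x" "\<not> P y"
  shows "\<exists>p q. (\<lambda>a b. R a b \<and> P a \<and> P b)\<^sup>*\<^sup>* x p \<and> P p \<and> R p q \<and> \<not> P q"
  using assms
proof (induction rule: converse_rtranclp_induct)
  case (step x x')
  show ?case
  proof (cases "P x'")
    case True
    then show ?thesis
      using step by (blast intro: converse_rtranclp_into_rtranclp)
  qed (use step in blast)
qed simp

definition delete_vertex :: "('a \<Rightarrow> 'a \<Rightarrow> bool) \<Rightarrow> 'a \<Rightarrow> 'a \<Rightarrow> 'a \<Rightarrow> bool" where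
  "delete_vertex E v a b \<longleftrightarrow> E a b \<and> a \<noteq> v \<and> b \<noteq> v"

lemma symp_delete_vertex: "simple_graph E \<Longrightarrow> symp (delete_vertex E v)"
  by (auto simp: symp_def delete_vertex_def simple_graph_def)

lemma deleted_vertex_notin_component:
  assumes "u \<noteq> v"
  shows "v \<notin> component (delete_vertex E v) u"
proof
  assume "v \<in> component (delete_vertex E v) u"
  then have "(delete_vertex E v)\<^sup>*\<^sup>* u v" by (simp add: component_def)
  then show False
    using assms by (cases rule: rtranclp.cases) (auto simp: delete_vertex_def)
qed

lemma component_delete_vertex_closed:
  assumes "u \<noteq> v" "k \<in> component (delete_vertex E v) u" "E k i" "i \<noteq> v"
  shows "i \<in> component (delete_vertex E v) u"
  using assms deleted_vertex_notin_component[OF assms(1)]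
  by (metis component_step delete_vertex_def)

lemma no_edge_between_components:
  assumes "simple_graph E" "a \<noteq> v" "n \<noteq> v" "a \<notin> component (delete_vertex E v) n"
    and "i \<in> component (delete_vertex E v) a" "j \<in> component (delete_vertex E v) n"
  shows "\<not> E i j"
proof
  assume "E i j"
  then have "j \<in> component (delete_vertex E v) a"
    using assms(2,3,5,6) component_delete_vertex_closed deleted_vertex_notin_component by metis
  then show False
    using components_disjoint[OF symp_delete_vertex[OF assms(1)] assms(4)] assms(6) by blast
qed

lemma rtranclp_delete_vertex_if_successively:
  assumes "successively E (x # xs)" "v \<notin> set (x # xs)"
  shows "(delete_vertex E v)\<^sup>*\<^sup>* x (last (x # xs))"
proof -
  have "successively (delete_vertex E v) (x # xs)"
    by (rule successively_mono[OF assms(1)]) (use assms(2) in \<open>auto simp: delete_vertex_def\<close>)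
  then show ?thesis
    using rtranclp_if_successively by (metis last_in_set list.distinct(1))
qed

lemma in_neighbour_component:
  assumes "connected_graph E" "x \<noteq> v"
  obtains n where "E v n" "x \<in> component (delete_vertex E v) n"
proof -
  obtain xs where walk: "successively E (v # xs)" "distinct (v # xs)" "last (v # xs) = x"
    using assms(1) rtranclp_distinct_successively unfolding connected_graph_def by metis
  then obtain n ns where xs: "xs = n # ns"
    using assms(2) by (cases xs) auto
  then have "(delete_vertex E v)\<^sup>*\<^sup>* n x"
    using walk rtranclp_delete_vertex_if_successively[of E n ns v] by auto
  then show thesis
    using that walk(1) xs by (auto simp: component_def)
qed

lemma pendant_set_components:
  assumes sg: "simple_graph E" and "E v a" "E v b" "a \<noteq> b"
  shows "pendant_set E v (component (delete_vertex E v) a \<union> component (delete_vertex E v) b)"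
    (is "pendant_set E v ?Y")
proof -
  have "a \<noteq> v" "b \<noteq> v"
    using simple_graph_neq[OF sg] assms(2,3) by metis+
  have "i = v" if "E i k" "k \<in> ?Y" "i \<notin> ?Y" for i k
  proof (rule ccontr)
    assume "i \<noteq> v"
    moreover have "E k i"
      using simple_graph_sym[OF sg that(1)] .
    ultimately have "i \<in> ?Y"
      using that(2) component_delete_vertex_closed[OF \<open>a \<noteq> v\<close>, of k E i]
        component_delete_vertex_closed[OF \<open>b \<noteq> v\<close>, of k E i] by blast
    with that(3) show False ..
  qed
  moreover have "a \<in> ?Y" "b \<in> ?Y"
    by (simp_all add: component_self)
  ultimately show ?thesis
    unfolding pendant_set_def using assms(2-4) by metis
qed

lemma pendant_set_component:
  assumes "simple_graph E" "E v x" "E v x'" "x \<noteq> x'" "x' \<in> component (delete_vertex E v) x"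
  shows "pendant_set E v (component (delete_vertex E v) x)"
  using pendant_set_components[OF assms(1-4)] component_subset[OF assms(5)]
  by (simp add: sup_absorb1)

lemma component_delete_vertex_subset:
  assumes "v \<notin> component (delete_vertex E w) x"
  shows "component (delete_vertex E w) x \<subseteq> component (delete_vertex E v) x"
proof (rule component_subset_component)
  fix a b
  assume "a \<in> component (delete_vertex E w) x" "delete_vertex E w a b"
  moreover from this have "b \<in> component (delete_vertex E w) x"
    by (rule component_step)
  ultimately show "delete_vertex E v a b"
    using assms by (auto simp: delete_vertex_def)
qed

lemma two_neighbours_outside:
  fixes E :: "'n::finite \<Rightarrow> 'n \<Rightarrow> bool"
  assumes "card S + 2 \<le> degree E v"
  obtains a b where "E v a" "E v b" "a \<noteq> b" "a \<notin> S" "b \<notin> S"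
proof -
  have "card {u. E v u} - card S \<le> card ({u. E v u} - S)"
    by (rule diff_card_le_card_Diff) simp
  then have "2 \<le> card ({u. E v u} - S)"
    using assms by (simp add: degree_def)
  then obtain a b where "a \<in> {u. E v u} - S" "b \<in> {u. E v u} - S" "a \<noteq> b"
    using card_le_Suc0_iff_eq[of "{u. E v u} - S"] by fastforce
  then show thesis
    using that by blast
qed

section \<open>Cycles\<close>

lemma cycle_list_Cons_iff:
  "cycle_list E (w # us) \<longleftrightarrow>
     2 \<le> length us \<and> distinct (w # us) \<and> successively E (w # us) \<and> E (last us) w"
proof (cases "2 \<le> length us")
  case True
  let ?vs = "w # us" and ?L = "length us"
  have last: "?vs ! ?L = last us"
    using True by (cases us) (auto simp: last_conv_nth)
  have split: "(\<forall>i < length ?vs. P i) \<longleftrightarrow> (\<forall>i < ?L. P i) \<and> P ?L" for P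
    by (auto simp: less_Suc_eq)
  have "(\<forall>i < length ?vs. E (?vs ! i) (?vs ! ((i + 1) mod length ?vs)))
      \<longleftrightarrow> (\<forall>i < ?L. E (?vs ! i) (?vs ! Suc i)) \<and> E (last us) w"
    unfolding split last[symmetric] by simp
  then show ?thesis
    using True unfolding cycle_list_def successively_conv_nth by auto
qed (auto simp: cycle_list_def)

lemma cycle_edgesI: "i < length vs \<Longrightarrow> {vs ! i, vs ! ((i + 1) mod length vs)} \<in> cycle_edges vs"
  by (auto simp: cycle_edges_def)

lemma cycle_edges_at_head:
  assumes "cycle_list E (w # us)"
  shows "{w, u} \<in> cycle_edges (w # us) \<longleftrightarrow> u = hd us \<or> u = last us"
proof -
  let ?vs = "w # us" and ?L = "length us"
  have L: "2 \<le> ?L" and dist: "distinct ?vs"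
    using assms by (auto simp: cycle_list_Cons_iff)
  have "us \<noteq> []"
    using L by auto
  then have hd: "?vs ! ((0 + 1) mod length ?vs) = hd us" and last: "?vs ! ?L = last us"
    using L by (simp_all add: hd_conv_nth last_conv_nth nth_Cons')
  show ?thesis
  proof
    assume "{w, u} \<in> cycle_edges ?vs"
    then obtain i where i: "i < Suc ?L" and "{w, u} = {?vs ! i, ?vs ! ((i + 1) mod Suc ?L)}"
      by (auto simp: cycle_edges_def)
    then consider "?vs ! 0 = ?vs ! i" "u = ?vs ! ((i + 1) mod Suc ?L)"
      | "?vs ! 0 = ?vs ! ((i + 1) mod Suc ?L)" "u = ?vs ! i"
      by (auto simp: doubleton_eq_iff)
    then show "u = hd us \<or> u = last us"
    proof cases
      case 1
      then have "i = 0"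
        using i dist by (simp add: nth_eq_iff_index_eq del: nth_Cons_0)
      then show ?thesis
        using 1 hd by simp
    next
      case 2
      then have "(i + 1) mod Suc ?L = 0"
        using dist by (simp add: nth_eq_iff_index_eq del: nth_Cons_0)
      then have "i = ?L"
        using i by (cases "i < ?L") auto
      then show ?thesis
        using 2 last by simp
    qed
  next
    assume "u = hd us \<or> u = last us"
    moreover have "{?vs ! 0, ?vs ! ((0 + 1) mod length ?vs)} \<in> cycle_edges ?vs"
      and "{?vs ! ?L, ?vs ! ((?L + 1) mod length ?vs)} \<in> cycle_edges ?vs"
      by (rule cycle_edgesI, simp)+
    ultimately show "{w, u} \<in> cycle_edges ?vs"
      unfolding hd last by (auto simp: insert_commute)
  qed
qed

lemma cycle_list_rotate:
  assumes "cycle_list E vs"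
  shows "cycle_list E (rotate k vs)"
proof -
  let ?n = "length vs"
  have "E (rotate k vs ! i) (rotate k vs ! ((i + 1) mod ?n))" if "i < ?n" for i
  proof -
    let ?j = "(i + k) mod ?n"
    have "0 < ?n"
      using that by linarith
    then have "?j < ?n"
      by (rule mod_less_divisor)
    then have "E (vs ! ?j) (vs ! ((?j + 1) mod ?n))"
      using assms unfolding cycle_list_def by blast
    moreover have "rotate k vs ! i = vs ! ?j"
      using that by (simp add: nth_rotate add.commute)
    moreover have "((i + 1) mod ?n + k) mod ?n = (?j + 1) mod ?n"
      by (simp add: mod_add_left_eq add.left_commute mod_Suc_eq)
    then have "rotate k vs ! ((i + 1) mod ?n) = vs ! ((?j + 1) mod ?n)"
      using \<open>0 < ?n\<close> by (simp add: nth_rotate add.commute)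
    ultimately show ?thesis
      by simp
  qed
  then show ?thesis
    using assms by (simp add: cycle_list_def)
qed

lemma cycle_list_rotate_to_head:
  assumes "cycle_list E vs" "v \<in> set vs"
  obtains ws where "cycle_list E (v # ws)" "set (v # ws) = set vs"
proof -
  obtain i where i: "i < length vs" "vs ! i = v"
    using assms(2) by (metis in_set_conv_nth)
  let ?r = "rotate i vs"
  have "?r \<noteq> []"
    using i by auto
  then have "hd ?r = v"
    using i by (simp add: hd_conv_nth nth_rotate)
  with \<open>?r \<noteq> []\<close> have "?r = v # tl ?r"
    by (cases ?r) auto
  then show thesis
    using that[of "tl ?r"] cycle_list_rotate[OF assms(1), of i] by simp
qed

lemma cycle_list_Cons_closing_path:
  assumes sg: "simple_graph E" and cyc: "cycle_list E (w # ws)"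
  shows "E w (hd ws)" "E w (last ws)" "hd ws \<noteq> last ws"
    and "last ws \<in> component (delete_vertex E w) (hd ws)"
proof -
  have L: "2 \<le> length ws" and dist: "distinct (w # ws)" and walk: "successively E (w # ws)"
    and closing: "E (last ws) w"
    using cyc unfolding cycle_list_Cons_iff by blast+
  obtain y ys where ws: "ws = y # ys" "ys \<noteq> []"
    using L by (cases ws) (auto simp flip: length_greater_0_conv)
  show "E w (hd ws)"
    using walk ws by simp
  show "E w (last ws)"
    using simple_graph_sym[OF sg closing] .
  show "hd ws \<noteq> last ws"
    using dist ws last_in_set[of ys] by auto
  have "(delete_vertex E w)\<^sup>*\<^sup>* y (last (y # ys))"
    using walk dist ws rtranclp_delete_vertex_if_successively[of E y ys w] by simp
  then show "last ws \<in> component (delete_vertex E w) (hd ws)"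
    using ws by (simp add: component_def)
qed

lemma cycle_through_edge:
  assumes sg: "simple_graph E" and "E w x" "E w x'" "x \<noteq> x'"
    and "x' \<in> component (delete_vertex E w) x"
  obtains us where "cycle_list E (w # us)" "last us = x'"
proof -
  have "(delete_vertex E w)\<^sup>*\<^sup>* x x'"
    using assms(5) by (simp add: component_def)
  then obtain xs where walk: "successively (delete_vertex E w) (x # xs)" "distinct (x # xs)"
      "last (x # xs) = x'"
    by (rule rtranclp_distinct_successively)
  have "xs \<noteq> []"
    using walk(3) assms(4) by auto
  then have L: "2 \<le> length (x # xs)"
    by (cases xs) auto
  have "x \<noteq> w"
    using simple_graph_neq[OF sg assms(2)] by simp
  have "w \<notin> set (x # xs)"
  proof
    assume "w \<in> set (x # xs)"
    then have "w \<in> component (delete_vertex E w) x"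
      using rtranclp_if_successively[OF walk(1)] by (simp add: component_def)
    then show False
      using deleted_vertex_notin_component[OF \<open>x \<noteq> w\<close>] by contradiction
  qed
  then have dist: "distinct (w # x # xs)"
    using walk(2) by simp
  have "successively E (x # xs)"
    by (rule successively_mono[OF walk(1)]) (simp add: delete_vertex_def)
  then have "successively E (w # x # xs)"
    using assms(2) by simp
  moreover have "E (last (x # xs)) w"
    using walk(3) simple_graph_sym[OF sg assms(3)] by simp
  ultimately have "cycle_list E (w # x # xs)"
    using L dist unfolding cycle_list_Cons_iff by blast
  then show thesis
    using that walk(3) by blast
qed

section \<open>Unicyclic graphs\<close>

lemma unicyclic_cycle_edges_eq:
  assumes "unicyclic E" "cycle_list E vs" "cycle_list E vs'"
  shows "cycle_edges vs = cycle_edges vs'"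
proof -
  obtain C where "cycles E = {C}"
    using assms(1) card_1_singletonE unfolding unicyclic_def by blast
  moreover have "cycle_edges vs \<in> cycles E" "cycle_edges vs' \<in> cycles E"
    using assms(2,3) by (auto simp: cycles_def)
  ultimately show ?thesis by simp
qed

lemma unicyclic_cycle_neighbours:
  assumes sg: "simple_graph E" and uc: "unicyclic E" and cyc: "cycle_list E (w # ws)"
    and "E w u" "u \<in> component (delete_vertex E w) (hd ws)"
  shows "u = hd ws \<or> u = last ws"
proof (cases "u = hd ws")
  case False
  obtain us where cyc': "cycle_list E (w # us)" "last us = u"
    using cycle_through_edge[OF sg cycle_list_Cons_closing_path(1)[OF sg cyc] assms(4)] False assms(5)
    by metis
  then have "{w, u} \<in> cycle_edges (w # ws)"
    using cycle_edges_at_head[OF cyc'(1)] unicyclic_cycle_edges_eq[OF uc cyc'(1) cyc] by blast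
  then show ?thesis
    using cycle_edges_at_head[OF cyc] by blast
qed simp

lemma not_G_SSP_if_pendant_components:
  assumes sg: "simple_graph E" and "E v a" "E v b" "a \<noteq> b" "E v n"
    and "a \<notin> component (delete_vertex E v) n" "b \<notin> component (delete_vertex E v) n"
    and "pendant_set E w Z" "Z \<subseteq> component (delete_vertex E v) n"
  shows "\<not> G_SSP E"
proof (rule not_G_SSP_if_two_pendant_sets[OF sg pendant_set_components[OF sg assms(2-4)] assms(8)])
  let ?C = "component (delete_vertex E v)"
  have "a \<noteq> v" "b \<noteq> v" "n \<noteq> v"
    using simple_graph_neq[OF sg] assms(2,3,5) by metis+
  show "(?C a \<union> ?C b) \<inter> Z = {}"
    using components_disjoint[OF symp_delete_vertex[OF sg]] assms(6,7,9) by blast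
  show "\<not> E i j" if "i \<in> ?C a \<union> ?C b" "j \<in> Z" for i j
    using that no_edge_between_components[OF sg \<open>a \<noteq> v\<close> \<open>n \<noteq> v\<close> assms(6)]
      no_edge_between_components[OF sg \<open>b \<noteq> v\<close> \<open>n \<noteq> v\<close> assms(7)] assms(9) by blast
qed

lemma not_G_SSP_if_degree4_on_cycle:
  fixes E :: "'n::finite \<Rightarrow> 'n \<Rightarrow> bool"
  assumes sg: "simple_graph E" and uc: "unicyclic E" and "on_cycle E v" "4 \<le> degree E v"
  shows "\<not> G_SSP E"
proof -
  let ?C = "component (delete_vertex E v)"
  obtain ws where cyc: "cycle_list E (v # ws)"
    using assms(3) cycle_list_rotate_to_head unfolding on_cycle_def by metis
  define x x' where "x = hd ws" and "x' = last ws"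
  have x: "E v x" "E v x'" "x \<noteq> x'" "x' \<in> ?C x"
    using cycle_list_Cons_closing_path[OF sg cyc] by (simp_all add: x_def x'_def)
  have "card {x, x'} + 2 \<le> degree E v"
    using assms(4) x(3) by simp
  then obtain a b where ab: "E v a" "E v b" "a \<noteq> b" "a \<notin> {x, x'}" "b \<notin> {x, x'}"
    by (rule two_neighbours_outside)
  then have "a \<notin> ?C x" "b \<notin> ?C x"
    using unicyclic_cycle_neighbours[OF sg uc cyc] by (auto simp: x_def x'_def)
  moreover have "pendant_set E v (?C x)"
    using pendant_set_component[OF sg x] .
  ultimately show ?thesis
    using not_G_SSP_if_pendant_components[OF sg ab(1-3) x(1)] by blast
qed

lemma walk_to_cycle:
  assumes "connected_graph E" "cycle_list E cyc" "v \<notin> set cyc"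
  obtains p w where "w \<in> set cyc" "p \<notin> set cyc" "E p w" "(delete_vertex E w)\<^sup>*\<^sup>* v p"
proof -
  have "cyc \<noteq> []"
    using assms(2) by (auto simp: cycle_list_def)
  then obtain p w where p: "(\<lambda>a b. E a b \<and> a \<notin> set cyc \<and> b \<notin> set cyc)\<^sup>*\<^sup>* v p"
      "p \<notin> set cyc" "E p w" "w \<in> set cyc"
    using rtranclp_exit[of E v "hd cyc" "\<lambda>a. a \<notin> set cyc"] assms(1,3)
    unfolding connected_graph_def by auto
  have "(\<lambda>a b. E a b \<and> a \<notin> set cyc \<and> b \<notin> set cyc) \<le> delete_vertex E w"
    using p(4) by (auto simp: delete_vertex_def)
  then have "(delete_vertex E w)\<^sup>*\<^sup>* v p"
    using p(1) by (rule predicate2D[OF rtranclp_mono])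
  then show thesis
    using that p(2-4) by blast
qed

lemma unicyclic_notin_cycle_component:
  assumes sg: "simple_graph E" and uc: "unicyclic E" and cyc: "cycle_list E (w # ws)"
    and "E p w" "p \<notin> set ws" "(delete_vertex E w)\<^sup>*\<^sup>* v p"
  shows "v \<notin> component (delete_vertex E w) (hd ws)"
proof
  assume "v \<in> component (delete_vertex E w) (hd ws)"
  with assms(6) have "p \<in> component (delete_vertex E w) (hd ws)"
    by (auto simp: component_def)
  then have "p = hd ws \<or> p = last ws"
    using unicyclic_cycle_neighbours[OF sg uc cyc] simple_graph_sym[OF sg assms(4)] by blast
  moreover have "ws \<noteq> []"
    using cyc by (auto simp: cycle_list_Cons_iff)
  ultimately show False
    using assms(5) by auto
qed

lemma neighbour_components_off_cycle:
  assumes "simple_graph E" "\<not> on_cycle E v" "E v n" "E v u" "u \<noteq> n"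
  shows "u \<notin> component (delete_vertex E v) n"
proof
  assume "u \<in> component (delete_vertex E v) n"
  then obtain us where "cycle_list E (v # us)"
    using cycle_through_edge[OF assms(1,3,4)] assms(5) by metis
  with assms(2) show False
    by (auto simp: on_cycle_def)
qed

lemma not_G_SSP_if_degree3_off_cycle:
  fixes E :: "'n::finite \<Rightarrow> 'n \<Rightarrow> bool"
  assumes sg: "simple_graph E" and uc: "unicyclic E" and off: "\<not> on_cycle E v" "3 \<le> degree E v"
  shows "\<not> G_SSP E"
proof -
  let ?C = "component (delete_vertex E v)"
  have conn: "connected_graph E"
    using uc by (simp add: unicyclic_def)
  have "cycles E \<noteq> {}"
    using uc by (auto simp: unicyclic_def)
  then obtain cyc where cyc: "cycle_list E cyc"
    by (auto simp: cycles_def)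
  with off(1) have "v \<notin> set cyc"
    by (auto simp: on_cycle_def)
  \<comment> \<open>w is where a walk from v first meets the cycle; this keeps v outside \<open>?Z\<close> below.\<close>
  then obtain p w where p: "w \<in> set cyc" "p \<notin> set cyc" "E p w" "(delete_vertex E w)\<^sup>*\<^sup>* v p"
    by (rule walk_to_cycle[OF conn cyc])
  obtain ws where cyc': "cycle_list E (w # ws)" "set (w # ws) = set cyc"
    using cycle_list_rotate_to_head[OF cyc p(1)] by blast
  let ?Z = "component (delete_vertex E w) (hd ws)"
  have w_hd: "E w (hd ws)"
    using cycle_list_Cons_closing_path(1)[OF sg cyc'(1)] .
  have pendant_Z: "pendant_set E w ?Z"
    using pendant_set_component[OF sg cycle_list_Cons_closing_path[OF sg cyc'(1)]] .
  have "p \<notin> set ws"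
    using p(2) cyc'(2) by auto
  then have "v \<notin> ?Z"
    by (rule unicyclic_notin_cycle_component[OF sg uc cyc'(1) p(3) _ p(4)])
  have "w \<noteq> v"
    using p(1) \<open>v \<notin> set cyc\<close> by blast
  then obtain n where n: "E v n" "w \<in> ?C n"
    using in_neighbour_component[OF conn] by metis
  have "n \<noteq> v"
    using simple_graph_neq[OF sg n(1)] by simp
  have "hd ws \<noteq> v"
    using \<open>v \<notin> ?Z\<close> component_self[of "hd ws"] by auto
  then have "hd ws \<in> ?C n"
    by (rule component_delete_vertex_closed[OF \<open>n \<noteq> v\<close> n(2) w_hd])
  have Z_sub: "?Z \<subseteq> ?C n"
    using component_delete_vertex_subset[OF \<open>v \<notin> ?Z\<close>] component_subset[OF \<open>hd ws \<in> ?C n\<close>]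
    by (rule order_trans)
  have "card {n} + 2 \<le> degree E v"
    using off(2) by simp
  then obtain a b where ab: "E v a" "E v b" "a \<noteq> b" "a \<notin> {n}" "b \<notin> {n}"
    by (rule two_neighbours_outside)
  have "a \<notin> ?C n" "b \<notin> ?C n"
    using neighbour_components_off_cycle[OF sg off(1) n(1)] ab by simp_all
  then show ?thesis
    by (rule not_G_SSP_if_pendant_components[OF sg ab(1-3) n(1) _ _ pendant_Z Z_sub])
qed

theorem corollary2p9:
  fixes E :: "'n::finite \<Rightarrow> 'n \<Rightarrow> bool"
  assumes "simple_graph E"
    and "unicyclic E"
    and "(\<exists>v. degree E v \<ge> 4) \<or> (\<exists>v. degree E v = 3 \<and> \<not> on_cycle E v)"
  shows "\<not> G_SSP E"
proof -
  obtain v where "4 \<le> degree E v \<or> degree E v = 3 \<and> \<not> on_cycle E v"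
    using assms(3) by blast
  then have "on_cycle E v \<and> 4 \<le> degree E v \<or> \<not> on_cycle E v \<and> 3 \<le> degree E v"
    by auto
  then show ?thesis
    using not_G_SSP_if_degree4_on_cycle not_G_SSP_if_degree3_off_cycle assms(1,2) by blast
qed

end
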